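(* Let $b\in\mathbb R^d$ and $\lambda_1\ge\lambda_2\ge\dots\ge\lambda_d>0$. Let $F(y)=-\sum_{i=1}^d|b_i|\sqrt{y_i}-\sqrt{\sum_{i=1}^d\lambda_i^{-1}y_i}$ and let $y^\star$ be an optimal solution of $\min_{y\in\Delta_{d-1}}F(y)$. Then $y^\star_i\ge B_i$ for all $i\in[d]$, where $B_i=b_i^2\,(\|b\|_2+\lambda_d^{-1/2})^{-2}$.
   Context: $\Delta_{d-1}=\{y\in\mathbb R^d:y_i\ge0,\sum_iy_i=1\}$. *)

theory Defs
  imports "HOL-Analysis.Analysis"
begin

text \<open>Vectors in R^d are represented as functions nat => real, indices 1..d.\<close>

definition std_simplex :: "nat \<Rightarrow> (nat \<Rightarrow> real) set" where
  "std_simplex d = {y. (\<forall>i\<in>{1..d}. y i \<ge> 0) \<and> (\<Sum>i=1..d. y i) = 1 \<and> (\<forall>i. i \<notin> {1..d} \<longrightarrow> y i = 0)}"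

definition Fobj :: "nat \<Rightarrow> (nat \<Rightarrow> real) \<Rightarrow> (nat \<Rightarrow> real) \<Rightarrow> (nat \<Rightarrow> real) \<Rightarrow> real" where
  "Fobj d b lam y = - (\<Sum>i=1..d. \<bar>b i\<bar> * sqrt (y i)) - sqrt (\<Sum>i=1..d. y i / lam i)"

end

theory Submission
  imports Defs
begin

text \<open>Moving a minimiser \<open>y\<close> of \<open>F\<close> towards a vertex, \<open>y\<^sub>t = (1 - t) y + t e\<^sub>k\<close>, scales every
  term of \<open>-F\<close> except \<open>|b\<^sub>k| sqrt y\<^sub>k\<close> by at least \<open>sqrt (1 - t)\<close>, while that term grows like
  \<open>sqrt ((1 - t) y\<^sub>k + t)\<close>. Comparing the rates at \<open>t = 0\<close> shows that optimality forces
  \<open>|b\<^sub>k| \<le> sqrt y\<^sub>k * (-F y)\<close>. By Cauchy-Schwarz and \<open>\<lambda>\<^sub>i \<ge> \<lambda>\<^sub>d\<close> on the simplex,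
  \<open>-F y \<le> \<parallel>b\<parallel>\<^sub>2 + 1 / sqrt \<lambda>\<^sub>d\<close>; squaring gives the bound.\<close>

text \<open>With \<open>p = sqrt (1 - t)\<close>, \<open>q = sqrt ((1 - t) a + t)\<close>, \<open>r = sqrt a\<close>, the claim compares
  \<open>c (1 - p) = c t / (1 + p)\<close> with \<open>\<beta> (q - r) = \<beta> t (1 - a) / (q + r)\<close>; the hypothesis is
  exactly that comparison with \<open>t\<close> cancelled.\<close>

lemma sqrt_mix_gain:
  fixes a t c \<beta> :: real
  assumes "0 \<le> a" "0 < t" "t < 1"
    and "c * (sqrt ((1 - t) * a + t) + sqrt a) < \<beta> * (1 - a) * (1 + sqrt (1 - t))"
  shows "c + \<beta> * sqrt a < sqrt (1 - t) * c + \<beta> * sqrt ((1 - t) * a + t)"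
proof -
  define p where "p = sqrt (1 - t)"
  define q where "q = sqrt ((1 - t) * a + t)"
  define r where "r = sqrt a"
  have "p < 1" "q > 0" "r \<ge> 0"
    using assms by (auto simp: p_def q_def r_def intro!: add_nonneg_pos)
  have "p\<^sup>2 = 1 - t" "q\<^sup>2 = (1 - t) * a + t" "r\<^sup>2 = a"
    using assms by (simp_all add: p_def q_def r_def)
  then have "(q - r) * (q + r) = (1 - p) * (1 + p) * (1 - a)"
    by algebra
  then have q_minus_r: "q - r = (1 - p) * ((1 + p) * (1 - a)) / (q + r)"
    using \<open>q > 0\<close> \<open>r \<ge> 0\<close> by (simp add: field_simps)
  have "c * (1 - p) = (1 - p) * (c * (q + r)) / (q + r)"
    using \<open>q > 0\<close> \<open>r \<ge> 0\<close> by simp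
  also have "\<dots> < (1 - p) * (\<beta> * (1 - a) * (1 + p)) / (q + r)"
    using assms(4) \<open>p < 1\<close> \<open>q > 0\<close> \<open>r \<ge> 0\<close>
    by (intro divide_strict_right_mono mult_strict_left_mono)
      (simp_all add: p_def q_def r_def add_pos_nonneg)
  also have "\<dots> = \<beta> * (q - r)"
    by (simp add: q_minus_r algebra_simps)
  finally show ?thesis
    by (simp add: p_def q_def r_def algebra_simps)
qed

lemma exists_sqrt_mix_gain:
  fixes a c \<beta> :: real
  assumes "0 \<le> a" and "c * sqrt a < \<beta> * (1 - a)"
  shows "\<exists>t. 0 < t \<and> t < 1 \<and> c + \<beta> * sqrt a < sqrt (1 - t) * c + \<beta> * sqrt ((1 - t) * a + t)"
proof -
  define \<phi> where
    "\<phi> t = \<beta> * (1 - a) * (1 + sqrt (1 - t)) - c * (sqrt ((1 - t) * a + t) + sqrt a)" for t :: real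
  have "(\<phi> \<longlongrightarrow> \<phi> 0) (at_right 0)"
    unfolding \<phi>_def by (intro tendsto_intros)
  moreover have "\<phi> 0 > 0"
    using assms(2) by (simp add: \<phi>_def)
  ultimately have "\<forall>\<^sub>F t in at_right 0. \<phi> t > 0"
    by (rule order_tendstoD)
  moreover have "\<forall>\<^sub>F t in at_right (0::real). t < 1"
    by (auto simp: eventually_at_right_field intro: exI[of _ 1])
  ultimately have "\<forall>\<^sub>F t in at_right 0. 0 < t \<and> t < 1 \<and> \<phi> t > 0"
    using eventually_at_right_less by eventually_elim simp
  then obtain t where "0 < t" "t < 1" "\<phi> t > 0"
    using eventually_happens'[OF trivial_limit_at_right_real] by blast
  with assms(1) show ?thesis
    by (intro exI[of _ t]) (auto simp: \<phi>_def intro: sqrt_mix_gain)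
qed

lemma std_simplexD:
  assumes "y \<in> std_simplex d"
  shows "\<And>i. i \<in> {1..d} \<Longrightarrow> 0 \<le> y i" "(\<Sum>i=1..d. y i) = 1"
    and "\<And>i. i \<notin> {1..d} \<Longrightarrow> y i = 0"
  using assms by (auto simp: std_simplex_def)

lemma mix_vertex_in_std_simplex:
  assumes "y \<in> std_simplex d" "k \<in> {1..d}" "0 \<le> t" "t \<le> 1"
  shows "(\<lambda>i. (1 - t) * y i + (if i = k then t else 0)) \<in> std_simplex d"
proof -
  have "(\<Sum>i=1..d. (1 - t) * y i + (if i = k then t else 0)) = (1 - t) * (\<Sum>i=1..d. y i) + t"
    using assms(2) by (simp add: sum.distrib sum_distrib_left)
  then show ?thesis
    using std_simplexD[OF assms(1)] assms(2-4) by (auto simp: std_simplex_def)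
qed

lemma sum_abs_mult_sqrt_le:
  assumes "y \<in> std_simplex d"
  shows "(\<Sum>i=1..d. \<bar>b i\<bar> * sqrt (y i)) \<le> sqrt (\<Sum>i=1..d. (b i)\<^sup>2)"
proof -
  have "(\<Sum>i=1..d. \<bar>b i\<bar> * sqrt (y i))\<^sup>2 \<le> (\<Sum>i=1..d. \<bar>b i\<bar>\<^sup>2) * (\<Sum>i=1..d. (sqrt (y i))\<^sup>2)"
    by (rule Cauchy_Schwarz_ineq_sum)
  also have "(\<Sum>i=1..d. (sqrt (y i))\<^sup>2) = 1"
    using std_simplexD[OF assms] by simp
  finally show ?thesis
    by (simp add: real_le_rsqrt)
qed

lemma sum_div_le_of_lower_bound:
  assumes "y \<in> std_simplex d" "0 < m" "\<And>i. i \<in> {1..d} \<Longrightarrow> m \<le> lam i"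
  shows "(\<Sum>i=1..d. y i / lam i) \<le> 1 / m"
proof -
  have "(\<Sum>i=1..d. y i / lam i) \<le> (\<Sum>i=1..d. y i / m)"
    using std_simplexD(1)[OF assms(1)] assms(2,3)
    by (intro sum_mono divide_left_mono) (auto intro: mult_pos_pos less_le_trans)
  also have "\<dots> = 1 / m"
    using std_simplexD(2)[OF assms(1)] by (simp add: sum_divide_distrib[symmetric])
  finally show ?thesis .
qed

lemma neg_Fobj_le:
  assumes "y \<in> std_simplex d" "0 < m" "\<And>i. i \<in> {1..d} \<Longrightarrow> m \<le> lam i"
  shows "- Fobj d b lam y \<le> sqrt (\<Sum>i=1..d. (b i)\<^sup>2) + 1 / sqrt m"
proof -
  have "sqrt (\<Sum>i=1..d. y i / lam i) \<le> sqrt (1 / m)"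
    using sum_div_le_of_lower_bound[OF assms] by (rule real_sqrt_le_mono)
  then show ?thesis
    using sum_abs_mult_sqrt_le[OF assms(1), of b] by (simp add: Fobj_def real_sqrt_divide)
qed

lemma Fobj_mix_vertex_le:
  assumes "y \<in> std_simplex d" "k \<in> {1..d}" "0 \<le> t" "t \<le> 1" "\<And>i. i \<in> {1..d} \<Longrightarrow> 0 \<le> lam i"
  shows "Fobj d b lam (\<lambda>i. (1 - t) * y i + (if i = k then t else 0))
    \<le> sqrt (1 - t) * (Fobj d b lam y + \<bar>b k\<bar> * sqrt (y k)) - \<bar>b k\<bar> * sqrt ((1 - t) * y k + t)"
proof -
  define z where "z = (\<lambda>i. (1 - t) * y i + (if i = k then t else 0))"
  have "(\<Sum>i=1..d. \<bar>b i\<bar> * sqrt (z i))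
      = \<bar>b k\<bar> * sqrt ((1 - t) * y k + t) + (\<Sum>i\<in>{1..d}-{k}. \<bar>b i\<bar> * sqrt (z i))"
    using assms(2) by (simp add: sum.remove z_def)
  also have "(\<Sum>i\<in>{1..d}-{k}. \<bar>b i\<bar> * sqrt (z i))
      = sqrt (1 - t) * (\<Sum>i\<in>{1..d}-{k}. \<bar>b i\<bar> * sqrt (y i))"
    by (simp add: sum_distrib_left z_def real_sqrt_mult ac_simps)
  also have "(\<Sum>i\<in>{1..d}-{k}. \<bar>b i\<bar> * sqrt (y i))
      = (\<Sum>i=1..d. \<bar>b i\<bar> * sqrt (y i)) - \<bar>b k\<bar> * sqrt (y k)"
    using assms(2) by (simp add: sum.remove)
  finally have concave_part: "(\<Sum>i=1..d. \<bar>b i\<bar> * sqrt (z i))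
      = \<bar>b k\<bar> * sqrt ((1 - t) * y k + t)
        + sqrt (1 - t) * ((\<Sum>i=1..d. \<bar>b i\<bar> * sqrt (y i)) - \<bar>b k\<bar> * sqrt (y k))" .
  have "(1 - t) * (\<Sum>i=1..d. y i / lam i) \<le> (\<Sum>i=1..d. z i / lam i)"
    unfolding sum_distrib_left using std_simplexD(1)[OF assms(1)] assms(3-5)
    by (intro sum_mono) (simp add: z_def divide_right_mono)
  then have "sqrt (1 - t) * sqrt (\<Sum>i=1..d. y i / lam i) \<le> sqrt (\<Sum>i=1..d. z i / lam i)"
    by (simp add: real_sqrt_mult[symmetric])
  then show ?thesis
    unfolding z_def[symmetric] Fobj_def concave_part by (simp add: algebra_simps)
qed

lemma Fobj_minimizer_coordinate_bound:
  assumes "y \<in> std_simplex d" "k \<in> {1..d}" "\<And>i. i \<in> {1..d} \<Longrightarrow> 0 \<le> lam i"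
    and min: "\<And>z. z \<in> std_simplex d \<Longrightarrow> Fobj d b lam y \<le> Fobj d b lam z"
  shows "\<bar>b k\<bar> \<le> sqrt (y k) * - Fobj d b lam y"
proof (rule ccontr)
  define \<beta> where "\<beta> = \<bar>b k\<bar>"
  define c where "c = - Fobj d b lam y - \<beta> * sqrt (y k)"
  have "0 \<le> y k"
    using std_simplexD(1)[OF assms(1,2)] .
  assume "\<not> \<bar>b k\<bar> \<le> sqrt (y k) * - Fobj d b lam y"
  then have "c * sqrt (y k) < \<beta> * (1 - y k)"
    using \<open>0 \<le> y k\<close> by (simp add: c_def \<beta>_def algebra_simps)
  then obtain t where t: "0 < t" "t < 1"
    and gain: "c + \<beta> * sqrt (y k) < sqrt (1 - t) * c + \<beta> * sqrt ((1 - t) * y k + t)"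
    using exists_sqrt_mix_gain \<open>0 \<le> y k\<close> by blast
  let ?z = "\<lambda>i. (1 - t) * y i + (if i = k then t else 0)"
  have "Fobj d b lam ?z \<le> - (sqrt (1 - t) * c + \<beta> * sqrt ((1 - t) * y k + t))"
    using Fobj_mix_vertex_le[OF assms(1,2), of t lam b] t assms(3)
    by (simp add: c_def \<beta>_def algebra_simps)
  also have "\<dots> < Fobj d b lam y"
    using gain by (simp add: c_def)
  finally show False
    using min[OF mix_vertex_in_std_simplex[OF assms(1,2)]] t by (simp add: not_le[symmetric])
qed

theorem lemma1:
  fixes d :: nat and b lam ystar :: "nat \<Rightarrow> real"
  assumes "d \<ge> 1"
    and "\<And>i j. 1 \<le> i \<Longrightarrow> i \<le> j \<Longrightarrow> j \<le> d \<Longrightarrow> lam i \<ge> lam j"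
    and "lam d > 0"
    and "ystar \<in> std_simplex d"
    and "\<And>y. y \<in> std_simplex d \<Longrightarrow> Fobj d b lam ystar \<le> Fobj d b lam y"
  shows "\<forall>i\<in>{1..d}. ystar i \<ge> (b i)\<^sup>2 / (sqrt (\<Sum>j=1..d. (b j)\<^sup>2) + 1 / sqrt (lam d))\<^sup>2"
proof
  fix k assume k: "k \<in> {1..d}"
  define R where "R = sqrt (\<Sum>j=1..d. (b j)\<^sup>2) + 1 / sqrt (lam d)"
  have lam_ge: "\<And>i. i \<in> {1..d} \<Longrightarrow> lam d \<le> lam i"
    using assms(2) by auto
  then have lam_nonneg: "\<And>i. i \<in> {1..d} \<Longrightarrow> 0 \<le> lam i"
    using assms(3) by (meson less_le_trans less_imp_le)
  have "- Fobj d b lam ystar \<le> R"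
    unfolding R_def using assms(4,3) lam_ge by (rule neg_Fobj_le)
  have "R > 0"
    using assms(3) unfolding R_def by (intro add_nonneg_pos) (simp_all add: sum_nonneg)
  have "0 \<le> ystar k"
    using std_simplexD(1)[OF assms(4) k] .
  have "\<bar>b k\<bar> \<le> sqrt (ystar k) * R"
    using Fobj_minimizer_coordinate_bound[OF assms(4) k lam_nonneg assms(5)]
      \<open>- Fobj d b lam ystar \<le> R\<close> mult_left_mono[OF _ real_sqrt_ge_zero[OF \<open>0 \<le> ystar k\<close>]]
    by (meson order_trans)
  then have "\<bar>b k\<bar>\<^sup>2 \<le> (sqrt (ystar k) * R)\<^sup>2"
    by (intro power_mono) simp_all
  then have "(b k)\<^sup>2 \<le> ystar k * R\<^sup>2"
    using \<open>0 \<le> ystar k\<close> by (simp add: power_mult_distrib)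
  with \<open>R > 0\<close> show "(b k)\<^sup>2 / (sqrt (\<Sum>j=1..d. (b j)\<^sup>2) + 1 / sqrt (lam d))\<^sup>2 \<le> ystar k"
    unfolding R_def[symmetric] by (simp add: pos_divide_le_eq)
qed

end
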